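(* If $g(t)^{-1}\log G(t)\to0$ as $t\to\infty$, then for all $c>0$, $\int_0^\infty e^{-cg(t)}\,\mathrm{d}t<\infty$.
   Context: The function $g:[0,\infty)\to(0,\infty)$ is $C^1$ and non-decreasing, and $G(t)=\int_0^tg(s)\,\mathrm{d}s$. *)

theory Defs
  imports "HOL-Analysis.Analysis"
begin

end

theory Submission
  imports Defs
begin

text \<open>
  Since g is non-decreasing, G(t) \<ge> g(0) t. The hypothesis gives ln G(t) \<le> (c/2) g(t)
  for large t, hence exp(-c g(t)) \<le> G(t)^(-2) \<le> (g(0) t)^(-2), which is integrable
  at infinity.
\<close>

lemma integral_ge_linear_if_mono:
  fixes g :: "real \<Rightarrow> real"
  assumes "continuous_on {0..} g" "mono_on {0..} g" "t \<ge> 0"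
  shows "g 0 * t \<le> integral {0..t} g"
proof -
  have "integral {0..t} (\<lambda>_. g 0) \<le> integral {0..t} g"
  proof (rule integral_le)
    show "g integrable_on {0..t}"
      by (rule integrable_continuous_interval, rule continuous_on_subset[OF assms(1)]) auto
    show "x \<in> {0..t} \<Longrightarrow> g 0 \<le> g x" for x
      using assms(2) unfolding mono_on_def by auto
  qed auto
  then show ?thesis using assms(3) by (simp add: mult.commute)
qed

lemma exp_neg_le_inverse_power2:
  fixes c s x :: real
  assumes "x > 0" "ln x \<le> c / 2 * s"
  shows "exp (- c * s) \<le> 1 / x\<^sup>2"
proof -
  have "x \<le> exp (c / 2 * s)"
    using assms by (metis exp_le_cancel_iff exp_ln)
  then have "x\<^sup>2 \<le> (exp (c / 2 * s))\<^sup>2"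
    using assms(1) by (intro power_mono) auto
  moreover have "exp (- c * s) = 1 / (exp (c / 2 * s))\<^sup>2"
    by (simp add: exp_minus power2_eq_square inverse_eq_divide flip: exp_add)
  ultimately show ?thesis
    using assms(1) by (simp add: frac_le)
qed

lemma integrable_on_atLeast_if_powr_bound:
  fixes f :: "real \<Rightarrow> real"
  assumes cont: "continuous_on {a..} f" and p: "p > 1"
    and bound: "\<forall>\<^sub>F t in at_top. \<bar>f t\<bar> \<le> C * t powr (- p)"
  shows "f integrable_on {a..}"
proof -
  obtain T0 where T0: "\<And>t. t \<ge> T0 \<Longrightarrow> \<bar>f t\<bar> \<le> C * t powr (- p)"
    using bound by (auto simp: eventually_at_top_linorder)
  define T where "T = max T0 (max a 1)"
  have T: "T \<ge> T0" "T \<ge> a" "T \<ge> 1"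
    by (auto simp: T_def)
  have head: "f integrable_on {a..T}"
    by (rule integrable_continuous_interval, rule continuous_on_subset[OF cont]) auto
  have tail: "f integrable_on {T..}"
  proof (rule measurable_bounded_by_integrable_imp_integrable_real)
    show "f \<in> borel_measurable (lebesgue_on {T..})"
      by (rule continuous_imp_measurable_on_sets_lebesgue,
          rule continuous_on_subset[OF cont]) (use T in auto)
    have "((\<lambda>t. t powr (- p)) has_integral - (T powr (- p + 1)) / (- p + 1)) {T..}"
      using T p by (intro has_integral_powr_to_inf) auto
    then have powr_integrable: "(\<lambda>t. t powr (- p)) integrable_on {T..}"
      by blast
    then show "(\<lambda>t. C * t powr (- p)) integrable_on {T..}"
      using integrable_on_cmult_left[OF powr_integrable, of C] by simp
    show "\<bar>f t\<bar> \<le> C * t powr (- p)" if "t \<in> {T..}" for t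
      using T0 T that by simp
  qed auto
  show ?thesis
  proof (rule integrable_Un'[OF head tail])
    show "negligible ({a..T} \<inter> {T..})"
      by (rule negligible_subset[of "{T}"]) auto
    show "{a..} = {a..T} \<union> {T..}"
      using T by auto
  qed
qed

theorem mainTheorem18:
  fixes g G :: "real \<Rightarrow> real"
  assumes C1: "g C1_differentiable_on {0..}"
    and pos: "\<And>t. t \<ge> 0 \<Longrightarrow> g t > 0"
    and mono: "mono_on {0..} g"
    and G_def: "\<And>t. t \<ge> 0 \<Longrightarrow> G t = integral {0..t} g"
    and lim: "((\<lambda>t. ln (G t) / g t) \<longlongrightarrow> 0) at_top"
  shows "\<forall>c>0. (\<lambda>t. exp (- c * g t)) integrable_on {0..}"
proof (intro allI impI)
  fix c :: real assume c: "c > 0"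
  have cont: "continuous_on {0..} g"
    using C1 C1_differentiable_imp_continuous_on by blast
  have "\<forall>\<^sub>F t in at_top. ln (G t) / g t < c / 2"
    using order_tendstoD(2)[OF lim, of "c / 2"] c by simp
  moreover have "\<forall>\<^sub>F t in at_top. t \<ge> (1::real)"
    by (rule eventually_ge_at_top)
  ultimately have bound: "\<forall>\<^sub>F t in at_top. \<bar>exp (- c * g t)\<bar> \<le> 1 / (g 0)\<^sup>2 * t powr (- 2)"
  proof eventually_elim
    case (elim t)
    have Glin: "0 < g 0 * t" "g 0 * t \<le> G t"
      using pos[of 0] elim(2) integral_ge_linear_if_mono[OF cont mono, of t] G_def[of t] by auto
    have "ln (G t) \<le> c / 2 * g t"
      using elim(1) pos[of t] elim(2) by (simp add: divide_less_eq)
    then have "exp (- c * g t) \<le> 1 / (G t)\<^sup>2"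
      using Glin by (intro exp_neg_le_inverse_power2) auto
    also have "\<dots> \<le> 1 / (g 0 * t)\<^sup>2"
      using Glin by (intro divide_left_mono power_mono mult_pos_pos) auto
    also have "\<dots> = 1 / (g 0)\<^sup>2 * t powr (- 2)"
      using elim(2) by (simp add: powr_minus powr_realpow power_mult_distrib field_simps)
    finally show ?case by simp
  qed
  have "continuous_on {0..} (\<lambda>t. exp (- c * g t))"
    by (intro continuous_intros cont)
  from integrable_on_atLeast_if_powr_bound[OF this _ bound]
  show "(\<lambda>t. exp (- c * g t)) integrable_on {0..}"
    by simp
qed

end
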